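(* Let $d\ge2$. If $p<1-p_c^{\operatorname{bond}}(d)$, then \[ P_p\bigl(K(\omega)\text{ encloses }\tilde B(n)\bigr)\longrightarrow 0\quad\text{as }n\to\infty. \]
   Context: A face is a $(d-1)$-dimensional elementary cube in $\mathbb{R}^d$ (a product of intervals $[l,l]$ or $[l,l+1]$, $l\in\mathbb{Z}$, with exactly one degenerate factor). In face percolation with parameter $p$ each face is open independently with probability $p$ (measure $P_p$); $K(\omega)$ is the union of open faces. $(\mathbb{Z}^d)^*=\mathbb{Z}^d+(1/2,\dots,1/2)$ and $\tilde B(n)=\{x^*\in(\mathbb{Z}^d)^*:\|x^*\|_\infty<n\}$. A union $X$ of faces encloses $V\subset(\mathbb{Z}^d)^*$ if there are finitely many faces $Q_1,\dots,Q_k$ of $X$ such that $V$ is contained in a bounded connected component of $\mathbb{R}^d\setminus\bigcup_{i=1}^kQ_i$. $p_c^{\operatorname{bond}}(d)$ is the critical probability of Bernoulli bond percolation on $\mathbb{Z}^d$. *)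

theory Defs
  imports "HOL-Probability.Probability"
begin

text \<open>Sites of the lattice Z^d, with d = CARD('n).\<close>
type_synonym 'n site = "'n \<Rightarrow> int"

text \<open>A face is encoded as (x, i): the (d-1)-cube with degenerate factor [x i, x i]
  in direction i and factors [x j, x j + 1] for j \<noteq> i. This is a bijection
  onto the set of all faces.\<close>
type_synonym 'n face = "'n site \<times> 'n"

definition face_set :: "'n::finite face \<Rightarrow> (real^'n) set" where
  "face_set f = (case f of (x, i) \<Rightarrow>
     {y. y $ i = of_int (x i) \<and>
         (\<forall>j. j \<noteq> i \<longrightarrow> of_int (x j) \<le> y $ j \<and> y $ j \<le> of_int (x j) + 1)})"

definition face_perc :: "real \<Rightarrow> ('n::finite face \<Rightarrow> bool) measure" where
  "face_perc p = PiM UNIV (\<lambda>_. measure_pmf (bernoulli_pmf p))"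

definition K :: "('n::finite face \<Rightarrow> bool) \<Rightarrow> (real^'n) set" where
  "K \<omega> = \<Union> {face_set f | f. \<omega> f}"

definition encloses :: "(real^'n::finite) set \<Rightarrow> (real^'n) set \<Rightarrow> bool" where
  "encloses X V \<longleftrightarrow> (\<exists>F::'n face set. finite F \<and> (\<forall>f\<in>F. face_set f \<subseteq> X) \<and>
     (\<exists>x. x \<notin> \<Union>(face_set ` F) \<and>
          bounded (connected_component_set (- \<Union>(face_set ` F)) x) \<and>
          V \<subseteq> connected_component_set (- \<Union>(face_set ` F)) x))"

definition dual_box :: "nat \<Rightarrow> (real^'n::finite) set" where
  "dual_box n = {(\<chi> i. of_int (z i) + 1/2) | z::'n site.
                   \<forall>i. \<bar>of_int (z i) + 1/2\<bar> < real n}"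

definition bond_perc :: "real \<Rightarrow> ('n::finite site \<times> 'n \<Rightarrow> bool) measure" where
  "bond_perc p = PiM UNIV (\<lambda>_. measure_pmf (bernoulli_pmf p))"

definition bond_adj :: "('n site \<times> 'n \<Rightarrow> bool) \<Rightarrow> 'n site \<Rightarrow> 'n site \<Rightarrow> bool" where
  "bond_adj \<omega> x y \<longleftrightarrow>
     (\<exists>i. \<omega> (x, i) \<and> y = x(i := x i + 1)) \<or> (\<exists>i. \<omega> (y, i) \<and> x = y(i := y i + 1))"

definition cluster :: "('n site \<times> 'n \<Rightarrow> bool) \<Rightarrow> 'n site \<Rightarrow> 'n site set" where
  "cluster \<omega> x = {y. (bond_adj \<omega>)\<^sup>*\<^sup>* x y}"

definition bond_theta :: "'n::finite itself \<Rightarrow> real \<Rightarrow> real" where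
  "bond_theta _ p = measure (bond_perc p :: ('n site \<times> 'n \<Rightarrow> bool) measure)
                      {\<omega>. infinite (cluster \<omega> ((\<lambda>_. 0)::'n site))}"

definition pc_bond :: "'n::finite itself \<Rightarrow> real" where
  "pc_bond t = Sup {p. 0 \<le> p \<and> p \<le> 1 \<and> bond_theta t p = 0}"

end

theory Submission
  imports Defs
begin

text \<open>
  Every face is crossed by exactly one bond of the dual lattice, the segment joining the centres
  of the two unit cubes sharing it. Declaring a dual bond open iff the face it crosses is closed
  turns \<open>P\<^sub>p\<close> into bond percolation with parameter \<open>1 - p\<close>. If finitely many open faces
  enclose the box, no open dual path leaves the bounded component containing it, so every dual
  cluster started in the box is finite. The event that all clusters are finite is not affected
  by opening finitely many bonds, hence has probability 0 or 1 by Kolmogorov's zero-one law;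
  since \<open>1 - p > p\<^sub>c\<close> the cluster of the origin is infinite with positive probability, so the
  event is null. By continuity from above, the probability that all dual clusters started in
  the box of radius \<open>n\<close> are finite therefore tends to 0.
\<close>

section \<open>The dual lattice\<close>

lemma of_int_plus_half_neq_of_int: "(of_int a :: real) + 1/2 \<noteq> of_int b"
proof
  assume "(of_int a :: real) + 1/2 = of_int b"
  then have "(of_int (2 * a + 1) :: real) = of_int (2 * b)" by simp
  then have "2 * a + 1 = 2 * b" by (simp only: of_int_eq_iff)
  then show False by presburger
qed

lemma eq_if_of_int_plus_half_between:
  assumes "(of_int y :: real) \<le> of_int x + 1/2" and "of_int x + 1/2 \<le> (of_int y :: real) + 1"
  shows "y = x"
proof -
  have "(of_int (y - x) :: real) < 1" "(of_int (x - y) :: real) < 1"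
    using assms unfolding of_int_diff by linarith+
  then show ?thesis by simp
qed

definition dual_site :: "'n::finite site \<Rightarrow> real^'n" where
  "dual_site x = (\<chi> i. of_int (x i) + 1/2)"

text \<open>Read as a bond of the dual lattice, \<open>(x, i)\<close> joins \<open>dual_site x\<close> to
  \<open>dual_site (x + e\<^sub>i)\<close> and crosses the face lying in the hyperplane \<open>y\<^sub>i = x\<^sub>i + 1\<close>.\<close>
definition crossed_face :: "'n site \<times> 'n \<Rightarrow> 'n face" where
  "crossed_face b = (case b of (x, i) \<Rightarrow> (x(i := x i + 1), i))"

definition dual_config :: "('n face \<Rightarrow> bool) \<Rightarrow> ('n site \<times> 'n \<Rightarrow> bool)" where
  "dual_config \<omega> = (\<lambda>b. \<not> \<omega> (crossed_face b))"

lemma face_set_subset_K_iff: "face_set f \<subseteq> K \<omega> \<longleftrightarrow> \<omega> (f :: 'n::finite face)"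
proof
  assume "\<omega> f"
  then show "face_set f \<subseteq> K \<omega>" unfolding K_def by blast
next
  assume sub: "face_set f \<subseteq> K \<omega>"
  obtain x i where f: "f = (x, i)" by (cases f)
  \<comment> \<open>the centre of a face lies on no other face\<close>
  define c :: "real^'n" where "c = (\<chi> j. if j = i then of_int (x i) else of_int (x j) + 1/2)"
  have "c \<in> face_set f" unfolding f face_set_def c_def by auto
  with sub obtain y k where open_face: "\<omega> (y, k)" and c_in: "c \<in> face_set (y, k)"
    unfolding K_def by auto
  have ck: "c $ k = of_int (y k)"
    and cj: "\<And>j. j \<noteq> k \<Longrightarrow> of_int (y j) \<le> c $ j \<and> c $ j \<le> of_int (y j) + 1"
    using c_in unfolding face_set_def by auto
  have "k = i"
  proof (rule ccontr)
    assume "k \<noteq> i"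
    then have "c $ k = of_int (x k) + 1/2" unfolding c_def by simp
    with ck of_int_plus_half_neq_of_int show False by metis
  qed
  have "y j = x j" for j
  proof (cases "j = i")
    case True
    then show ?thesis using ck \<open>k = i\<close> unfolding c_def by simp
  next
    case False
    then show ?thesis
      using cj[of j] \<open>k = i\<close> eq_if_of_int_plus_half_between[of "y j" "x j"] unfolding c_def by simp
  qed
  then have "y = x" by (rule ext)
  with \<open>k = i\<close> open_face f show "\<omega> f" by simp
qed

lemma dual_bond_meets_only_crossed_face:
  fixes x :: "'n::finite site"
  assumes "z \<in> closed_segment (dual_site x) (dual_site (x(i := x i + 1)))"
    and "z \<in> face_set h"
  shows "h = crossed_face (x, i)"
proof -
  obtain u where u: "0 \<le> u" "u \<le> 1"
    and z: "z = (1 - u) *\<^sub>R dual_site x + u *\<^sub>R dual_site (x(i := x i + 1))"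
    using assms(1) unfolding closed_segment_def by auto
  have zj: "z $ j = (if j = i then of_int (x i) + 1/2 + u else of_int (x j) + 1/2)" for j
    unfolding z dual_site_def by (auto simp: algebra_simps)
  obtain y k where h: "h = (y, k)" by (cases h)
  have zk: "z $ k = of_int (y k)"
    and z_between: "\<And>j. j \<noteq> k \<Longrightarrow> of_int (y j) \<le> z $ j \<and> z $ j \<le> of_int (y j) + 1"
    using assms(2) unfolding h face_set_def by auto
  have ki: "k = i"
  proof (rule ccontr)
    assume "k \<noteq> i"
    then have "z $ k = of_int (x k) + 1/2" using zj by simp
    with zk of_int_plus_half_neq_of_int show False by metis
  qed
  have "of_int (y i - x i) = 1/2 + u" using zk zj[of i] ki by simp
  with u have "(of_int (y i - x i) :: real) \<ge> 1/2" "(of_int (y i - x i) :: real) \<le> 3/2" by linarith+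
  then have "y i - x i = 1" by linarith
  moreover have "y j = x j" if "j \<noteq> i" for j
    using z_between[of j] that ki zj[of j] eq_if_of_int_plus_half_between[of "y j" "x j"] by simp
  ultimately have "y = x(i := x i + 1)" by (auto intro!: ext)
  then show ?thesis using h ki unfolding crossed_face_def by simp
qed

lemma finite_site_set_iff_bounded:
  fixes A :: "'n::finite site set"
  shows "finite A \<longleftrightarrow> (\<exists>m::nat. \<forall>z\<in>A. \<forall>i. \<bar>z i\<bar> \<le> int m)"
proof
  assume "finite A"
  then have "bdd_above ((\<lambda>(z, i). \<bar>z i\<bar>) ` (A \<times> UNIV))" by (simp add: bdd_above_finite)
  then obtain M where "\<And>z i. z \<in> A \<Longrightarrow> \<bar>z i\<bar> \<le> M" unfolding bdd_above_def by fastforce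
  then have "\<forall>z\<in>A. \<forall>i. \<bar>z i\<bar> \<le> int (nat M)" by fastforce
  then show "\<exists>m::nat. \<forall>z\<in>A. \<forall>i. \<bar>z i\<bar> \<le> int m" ..
next
  assume "\<exists>m::nat. \<forall>z\<in>A. \<forall>i. \<bar>z i\<bar> \<le> int m"
  then obtain m :: nat where "\<forall>z\<in>A. \<forall>i. \<bar>z i\<bar> \<le> int m" ..
  then have "A \<subseteq> PiE UNIV (\<lambda>_. {- int m .. int m})"
    by (force simp: PiE_UNIV_domain abs_le_iff)
  moreover have "finite (PiE (UNIV :: 'n set) (\<lambda>_. {- int m .. int m}))" by (rule finite_PiE) auto
  ultimately show "finite A" by (rule finite_subset)
qed

lemma finite_dual_sites_in_bounded:
  assumes "bounded (C :: (real^'n::finite) set)"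
  shows "finite {x :: 'n site. dual_site x \<in> C}"
proof -
  obtain B where B: "\<And>v. v \<in> C \<Longrightarrow> norm v \<le> B" using assms unfolding bounded_iff by auto
  have "\<bar>x i\<bar> \<le> int (nat \<lceil>B\<rceil> + 1)" if "dual_site x \<in> C" for x i
  proof -
    have "\<bar>of_int (x i) + 1/2\<bar> \<le> B"
      using B[OF that] component_le_norm_cart[of "dual_site x" i] unfolding dual_site_def by simp
    then have "\<bar>of_int (x i)\<bar> \<le> of_int \<lceil>B\<rceil> + (1::real)"
      using le_of_int_ceiling[of B] by linarith
    then show ?thesis by linarith
  qed
  then show ?thesis using finite_site_set_iff_bounded by blast
qed

lemma dual_site_in_dual_box:
  assumes "\<forall>i. \<bar>x i\<bar> < int n"
  shows "dual_site x \<in> dual_box n"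
proof -
  have "\<bar>(of_int (x i) :: real) + 1/2\<bar> < real n" for i
  proof -
    have "\<bar>x i\<bar> \<le> int n - 1" using assms by (meson zle_diff1_eq)
    then have "\<bar>(of_int (x i) :: real)\<bar> \<le> real n - 1" by linarith
    then show ?thesis by linarith
  qed
  then show ?thesis unfolding dual_box_def dual_site_def by blast
qed

section \<open>Clusters\<close>

lemma cluster_mono:
  assumes "\<And>b. \<eta> b \<Longrightarrow> \<eta>' b"
  shows "cluster \<eta> y \<subseteq> cluster \<eta>' y"
proof -
  have "bond_adj \<eta> \<le> bond_adj \<eta>'" unfolding bond_adj_def using assms by (auto simp: le_fun_def)
  then have "(bond_adj \<eta>)\<^sup>*\<^sup>* \<le> (bond_adj \<eta>')\<^sup>*\<^sup>*" by (rule rtranclp_mono)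
  then show ?thesis unfolding cluster_def by (auto simp: le_fun_def)
qed

lemma enclosed_cluster_finite:
  fixes \<omega> :: "'n::finite face \<Rightarrow> bool"
  assumes F: "\<forall>f\<in>F. face_set f \<subseteq> K \<omega>"
    and bdd: "bounded (connected_component_set (- \<Union>(face_set ` F)) x)"
    and y: "dual_site y \<in> connected_component_set (- \<Union>(face_set ` F)) x"
  shows "finite (cluster (dual_config \<omega>) y)"
proof -
  let ?U = "- \<Union>(face_set ` F)"
  let ?C = "connected_component_set ?U x"
  have dual_bond_stays: "dual_site b \<in> ?C"
    if "dual_site a \<in> ?C" "dual_config \<omega> (w, i)" "{a, b} = {w, w(i := w i + 1)}" for a b w i
  proof -
    let ?S = "closed_segment (dual_site w) (dual_site (w(i := w i + 1)))"
    have "?S \<subseteq> ?U"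
    proof
      fix z assume z: "z \<in> ?S"
      have "h \<notin> F" if "z \<in> face_set h" for h
        using dual_bond_meets_only_crossed_face[OF z that] F \<open>dual_config \<omega> (w, i)\<close>
        unfolding dual_config_def face_set_subset_K_iff by blast
      then show "z \<in> ?U" by blast
    qed
    moreover have "dual_site a \<in> ?S" "dual_site b \<in> ?S" using that(3) by (auto simp: doubleton_eq_iff)
    ultimately have "?S \<subseteq> connected_component_set ?U (dual_site a)"
      by (intro connected_component_maximal) auto
    also have "\<dots> = ?C" by (rule connected_component_eq[OF that(1)])
    finally show ?thesis using \<open>dual_site b \<in> ?S\<close> by blast
  qed
  have "dual_site z \<in> ?C" if "(bond_adj (dual_config \<omega>))\<^sup>*\<^sup>* y z" for z
    using that
  proof (induction rule: rtranclp_induct)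
    case base
    show ?case using y .
  next
    case (step b c)
    from step.hyps(2) show ?case unfolding bond_adj_def
    proof (elim disjE exE conjE)
      fix i assume "dual_config \<omega> (b, i)" "c = b(i := b i + 1)"
      then show ?thesis
        using step.IH dual_bond_stays[where a = b and b = c and w = b and i = i] by metis
    next
      fix i assume "dual_config \<omega> (c, i)" "b = c(i := c i + 1)"
      then show ?thesis
        using step.IH dual_bond_stays[where a = b and b = c and w = c and i = i] by (metis insert_commute)
    qed
  qed
  then have "cluster (dual_config \<omega>) y \<subseteq> {z. dual_site z \<in> ?C}" unfolding cluster_def by blast
  then show ?thesis using finite_dual_sites_in_bounded[OF bdd] finite_subset by blast
qed

lemma finite_cluster_if_finitely_many_bonds_added:
  fixes \<eta> \<eta>' :: "'n::finite site \<times> 'n \<Rightarrow> bool"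
  assumes "finite T" and added: "\<And>b. \<eta>' b \<Longrightarrow> \<eta> b \<or> b \<in> T"
    and finite_clusters: "\<And>x. finite (cluster \<eta> x)"
  shows "finite (cluster \<eta>' y)"
proof -
  \<comment> \<open>an \<open>\<eta>'\<close>-path from \<open>y\<close> is an \<open>\<eta>\<close>-path from \<open>y\<close> or from an endpoint of the last
    added bond it uses\<close>
  define E where "E = insert y (fst ` T \<union> (\<lambda>(x, i). x(i := x i + 1)) ` T)"
  have "\<exists>t\<in>E. (bond_adj \<eta>)\<^sup>*\<^sup>* t z" if "(bond_adj \<eta>')\<^sup>*\<^sup>* y z" for z
    using that
  proof (induction rule: rtranclp_induct)
    case base
    show ?case by (auto simp: E_def)
  next
    case (step z w)
    show ?case
    proof (cases "bond_adj \<eta> z w")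
      case True
      then show ?thesis using step.IH by (meson rtranclp.rtrancl_into_rtrancl)
    next
      case False
      from step.hyps(2) have "w \<in> E" unfolding bond_adj_def
      proof (elim disjE exE conjE)
        fix i assume "\<eta>' (z, i)" "w = z(i := z i + 1)"
        with False added have "(z, i) \<in> T" unfolding bond_adj_def by blast
        then show "w \<in> E" using \<open>w = z(i := z i + 1)\<close> unfolding E_def by force
      next
        fix i assume "\<eta>' (w, i)" "z = w(i := w i + 1)"
        with False added have "(w, i) \<in> T" unfolding bond_adj_def by blast
        then show "w \<in> E" unfolding E_def by force
      qed
      then show ?thesis by blast
    qed
  qed
  then have "cluster \<eta>' y \<subseteq> (\<Union>t\<in>E. cluster \<eta> t)" unfolding cluster_def by blast
  moreover have "finite E" using \<open>finite T\<close> by (simp add: E_def)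
  ultimately show ?thesis using finite_clusters by (meson finite_UN_I finite_subset)
qed

definition all_clusters_finite :: "('n::finite site \<times> 'n \<Rightarrow> bool) set" where
  "all_clusters_finite = {\<eta>. \<forall>y. finite (cluster \<eta> y)}"

definition box_clusters_finite :: "nat \<Rightarrow> ('n::finite site \<times> 'n \<Rightarrow> bool) set" where
  "box_clusters_finite n = {\<eta>. \<forall>y. (\<forall>i. \<bar>y i\<bar> < int n) \<longrightarrow> finite (cluster \<eta> y)}"

lemma open_finitely_many_in_all_clusters_finite_iff:
  assumes "finite T"
  shows "(\<lambda>b. b \<in> T \<or> \<eta> b) \<in> all_clusters_finite \<longleftrightarrow> \<eta> \<in> all_clusters_finite"
proof
  assume "(\<lambda>b. b \<in> T \<or> \<eta> b) \<in> all_clusters_finite"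
  moreover have "cluster \<eta> y \<subseteq> cluster (\<lambda>b. b \<in> T \<or> \<eta> b) y" for y by (rule cluster_mono) simp
  ultimately show "\<eta> \<in> all_clusters_finite"
    unfolding all_clusters_finite_def using finite_subset by blast
next
  assume "\<eta> \<in> all_clusters_finite"
  then have "finite (cluster \<eta> x)" for x unfolding all_clusters_finite_def by simp
  then have "finite (cluster (\<lambda>b. b \<in> T \<or> \<eta> b) y)" for y
    using finite_cluster_if_finitely_many_bonds_added
        [OF assms, where \<eta> = \<eta> and \<eta>' = "\<lambda>b. b \<in> T \<or> \<eta> b"]
    by blast
  then show "(\<lambda>b. b \<in> T \<or> \<eta> b) \<in> all_clusters_finite" unfolding all_clusters_finite_def by simp
qed

lemma decseq_box_clusters_finite: "decseq box_clusters_finite"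
proof (rule decseq_SucI)
  fix n
  have "\<bar>y i\<bar> < int (Suc n)" if "\<forall>i. \<bar>y i\<bar> < int n" for y :: "'n::finite site" and i
    using spec[OF that, of i] by simp
  then show "box_clusters_finite (Suc n) \<subseteq> box_clusters_finite n"
    unfolding box_clusters_finite_def by blast
qed

lemma INT_box_clusters_finite: "(\<Inter>n. box_clusters_finite n) = all_clusters_finite"
proof (intro equalityI subsetI)
  fix \<eta> assume \<eta>: "\<eta> \<in> (\<Inter>n. box_clusters_finite n)"
  have "finite (cluster \<eta> y)" for y
  proof -
    obtain m :: nat where "\<forall>i. \<bar>y i\<bar> \<le> int m" using finite_site_set_iff_bounded[of "{y}"] by auto
    then have "\<forall>i. \<bar>y i\<bar> < int (Suc m)" by (meson le_less_trans lessI of_nat_less_iff)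
    with \<eta> show ?thesis unfolding box_clusters_finite_def by blast
  qed
  then show "\<eta> \<in> all_clusters_finite" unfolding all_clusters_finite_def by simp
qed (auto simp: all_clusters_finite_def box_clusters_finite_def)

section \<open>Measurability\<close>

lemma measurable_bool_field_coordinate[measurable]:
  "Measurable.pred (PiM UNIV (\<lambda>_. count_space UNIV)) (\<lambda>\<omega>. \<omega> i)"
  by (rule measurable_component_singleton) simp

lemma measurable_bool_field_map:
  fixes g :: "'j \<Rightarrow> 'i" and P :: "bool \<Rightarrow> bool"
  shows "(\<lambda>\<omega> j. P (\<omega> (g j))) \<in> PiM UNIV (\<lambda>_. count_space UNIV) \<rightarrow>\<^sub>M PiM UNIV (\<lambda>_. count_space UNIV)"
proof (rule measurable_PiM_single')
  fix j
  have "(\<lambda>\<omega>. \<omega> (g j)) \<in> PiM UNIV (\<lambda>_. count_space UNIV) \<rightarrow>\<^sub>M count_space UNIV"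
    by (rule measurable_component_singleton) simp
  then show "(\<lambda>\<omega>. P (\<omega> (g j))) \<in> PiM UNIV (\<lambda>_. count_space UNIV) \<rightarrow>\<^sub>M count_space UNIV"
    by (rule measurable_compose) simp
qed simp

lemma sets_bernoulli_field[measurable_cong]:
  "sets (PiM I (\<lambda>_. measure_pmf (bernoulli_pmf p))) = sets (PiM I (\<lambda>_. count_space UNIV))"
  by (rule sets_PiM_cong) auto

lemma space_bernoulli_field[simp]: "space (PiM UNIV (\<lambda>_. measure_pmf (bernoulli_pmf p))) = UNIV"
  by (simp add: space_PiM PiE_UNIV_domain)

lemma prob_space_bernoulli_field: "prob_space (PiM I (\<lambda>_. measure_pmf (bernoulli_pmf p)))"
  by (intro prob_space_PiM prob_space_measure_pmf)

abbreviation bond_events :: "('n::finite site \<times> 'n \<Rightarrow> bool) measure" where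
  "bond_events \<equiv> PiM UNIV (\<lambda>_. count_space UNIV)"

lemma measurable_bond_adj[measurable]: "Measurable.pred bond_events (\<lambda>\<eta>. bond_adj \<eta> x y)"
  unfolding bond_adj_def by measurable

lemma measurable_relpowp_bond_adj[measurable]:
  "Measurable.pred bond_events (\<lambda>\<eta>. (bond_adj \<eta> ^^ k) x y)"
proof (induction k arbitrary: y)
  case (Suc k)
  have "(\<lambda>\<eta>. (bond_adj \<eta> ^^ Suc k) x y) = (\<lambda>\<eta>. \<exists>w. (bond_adj \<eta> ^^ k) x w \<and> bond_adj \<eta> w y)"
    by (auto simp: relpowp_Suc_right OO_def)
  also have "Measurable.pred bond_events \<dots>" using Suc by measurable
  finally show ?case .
qed simp

lemma measurable_finite_cluster[measurable]: "Measurable.pred bond_events (\<lambda>\<eta>. finite (cluster \<eta> x))"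
proof -
  have "(\<lambda>\<eta>. finite (cluster \<eta> x)) =
    (\<lambda>\<eta>. \<exists>m::nat. \<forall>y. (\<exists>k. (bond_adj \<eta> ^^ k) x y) \<longrightarrow> (\<forall>i. \<bar>y i\<bar> \<le> int m))"
    unfolding cluster_def finite_site_set_iff_bounded by (auto simp: rtranclp_power)
  also have "Measurable.pred bond_events \<dots>" by measurable
  finally show ?thesis .
qed

lemma sets_all_clusters_finite: "all_clusters_finite \<in> sets bond_events"
proof -
  have "{\<eta> \<in> space bond_events. \<forall>y. finite (cluster \<eta> y)} \<in> sets bond_events" by measurable
  then show ?thesis unfolding all_clusters_finite_def by (simp add: space_PiM PiE_UNIV_domain)
qed

lemma sets_box_clusters_finite: "box_clusters_finite n \<in> sets bond_events"
proof -
  have "{\<eta> \<in> space bond_events. \<forall>y. (\<forall>i. \<bar>y i\<bar> < int n) \<longrightarrow> finite (cluster \<eta> y)}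
      \<in> sets bond_events"
    by measurable
  then show ?thesis unfolding box_clusters_finite_def by (simp add: space_PiM PiE_UNIV_domain)
qed

section \<open>Kolmogorov's zero-one law for Bernoulli fields\<close>

lemma indep_vars_bernoulli_field_reindex:
  fixes e :: "'j \<Rightarrow> 'i"
  assumes "inj e"
  shows "prob_space.indep_vars (PiM UNIV (\<lambda>_. measure_pmf (bernoulli_pmf p)))
    (\<lambda>_. measure_pmf (bernoulli_pmf p)) (\<lambda>j \<omega>. \<omega> (e j)) UNIV"
proof -
  let ?B = "measure_pmf (bernoulli_pmf p)"
  let ?P = "PiM UNIV (\<lambda>_::'i. ?B)"
  interpret prob_space ?P by (rule prob_space_bernoulli_field)
  have coordinate: "(\<lambda>\<omega>. \<omega> (e j)) \<in> ?P \<rightarrow>\<^sub>M ?B" for j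
    by (rule measurable_component_singleton) simp
  have "distr ?P ?B (\<lambda>\<omega>. \<omega> (e j)) = ?B" for j
    by (rule distr_PiM_component) (auto simp: prob_space_measure_pmf)
  moreover have "distr ?P (PiM UNIV (\<lambda>_. ?B)) (\<lambda>\<omega>. \<lambda>j\<in>UNIV. \<omega> (e j)) = PiM UNIV (\<lambda>_. ?B)"
    using distr_PiM_reindex[of UNIV "\<lambda>_. ?B" e UNIV] assms by (simp add: prob_space_measure_pmf)
  ultimately show ?thesis
    by (subst indep_vars_iff_distr_eq_PiM) (simp_all add: coordinate)
qed

lemma stable_event_in_tail_sigma:
  fixes e :: "nat \<Rightarrow> 'i" and X :: "('i \<Rightarrow> bool) set"
  assumes "bij e"
    and X: "X \<in> sets (PiM UNIV (\<lambda>_. count_space UNIV))"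
    and stable: "\<And>T \<eta>. finite T \<Longrightarrow> (\<lambda>i. i \<in> T \<or> \<eta> i) \<in> X \<longleftrightarrow> \<eta> \<in> X"
  shows "X \<in> sigma_sets UNIV (\<Union>j\<in>{n..}. sigma_sets UNIV {(\<lambda>\<eta>. \<eta> (e j)) -` S | S. S \<in> UNIV})"
    (is "_ \<in> sigma_sets UNIV ?G")
proof -
  define M where "M = measure_of (UNIV :: ('i \<Rightarrow> bool) set) ?G (\<lambda>_. 0)"
  have sets_M: "sets M = sigma_sets UNIV ?G" unfolding M_def by (rule sets_measure_of) simp
  have space_M: "space M = UNIV" unfolding M_def by (rule space_measure_of) simp
  define T where "T = e ` {..<n}"
  \<comment> \<open>forcing the coordinates \<open>e ` {..<n}\<close> to \<open>True\<close> leaves \<open>X\<close> invariant and forgets them\<close>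
  have "(\<lambda>\<eta> i. i \<in> T \<or> \<eta> i) \<in> M \<rightarrow>\<^sub>M PiM UNIV (\<lambda>_. count_space UNIV)"
  proof (rule measurable_PiM_single')
    fix i
    show "(\<lambda>\<eta>. i \<in> T \<or> \<eta> i) \<in> M \<rightarrow>\<^sub>M count_space UNIV"
    proof (cases "i \<in> T")
      case False
      then obtain j where j: "i = e j" "n \<le> j"
        using \<open>bij e\<close> unfolding T_def by (metis bij_pointE imageI lessThan_iff not_le)
      have "(\<lambda>\<eta>. \<eta> i) -` {a} \<in> sets M" for a
        unfolding sets_M j(1) using j(2) by (blast intro: sigma_sets.Basic)
      then show ?thesis using False by (simp add: measurable_count_space_eq2 space_M)
    qed simp
  qed (simp add: space_M)
  from measurable_sets[OF this X]
  have "(\<lambda>\<eta> i. i \<in> T \<or> \<eta> i) -` X \<in> sets M" by (simp add: space_M)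
  moreover have "(\<lambda>\<eta> i. i \<in> T \<or> \<eta> i) -` X = X" using stable[of T] by (auto simp: T_def)
  ultimately show ?thesis by (simp add: sets_M)
qed

theorem bernoulli_field_zero_one_law:
  fixes X :: "('i \<Rightarrow> bool) set"
  assumes "countable (UNIV :: 'i set)" and "infinite (UNIV :: 'i set)"
    and "X \<in> sets (PiM UNIV (\<lambda>_. count_space UNIV))"
    and "\<And>T \<eta>. finite T \<Longrightarrow> (\<lambda>i. i \<in> T \<or> \<eta> i) \<in> X \<longleftrightarrow> \<eta> \<in> X"
  shows "measure (PiM UNIV (\<lambda>_::'i. measure_pmf (bernoulli_pmf p))) X \<in> {0, 1}"
proof -
  let ?B = "measure_pmf (bernoulli_pmf p)"
  let ?P = "PiM UNIV (\<lambda>_::'i. ?B)"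
  interpret prob_space ?P by (rule prob_space_bernoulli_field)
  obtain e' :: "'i \<Rightarrow> nat" where "bij e'" using countableE_infinite[OF assms(1,2)] .
  define e where "e = inv e'"
  have "bij e" unfolding e_def using \<open>bij e'\<close> by (rule bij_imp_bij_inv)
  define A where "A j = sigma_sets (space ?P) {(\<lambda>\<eta>. \<eta> (e j)) -` S \<inter> space ?P | S. S \<in> sets ?B}" for j
  have "indep_sets A UNIV"
    using indep_vars_bernoulli_field_reindex[OF bij_is_inj[OF \<open>bij e\<close>], of p]
    unfolding indep_vars_def A_def by (rule conjunct2)
  moreover have "sigma_algebra (space ?P) (A j)" for j
    unfolding A_def by (rule sigma_algebra_sigma_sets) auto
  moreover have "X \<in> tail_events A"
    using stable_event_in_tail_sigma[OF \<open>bij e\<close> assms(3,4)] by (simp add: tail_events_def A_def)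
  ultimately show ?thesis using kolmogorov_0_1_law by blast
qed

section \<open>Face percolation as dual bond percolation\<close>

lemma map_pmf_Not_bernoulli:
  assumes "0 \<le> p" "p \<le> 1"
  shows "map_pmf Not (bernoulli_pmf p) = bernoulli_pmf (1 - p)"
proof (rule pmf_eqI)
  fix x :: bool
  have "Not -` {x} = {\<not> x}" by auto
  then have "pmf (map_pmf Not (bernoulli_pmf p)) x = pmf (bernoulli_pmf p) (\<not> x)"
    by (simp add: pmf_map measure_pmf_single)
  also have "\<dots> = pmf (bernoulli_pmf (1 - p)) x" using assms by (cases x) simp_all
  finally show "pmf (map_pmf Not (bernoulli_pmf p)) x = pmf (bernoulli_pmf (1 - p)) x" .
qed

lemma distr_bernoulli_field_Not:
  assumes "0 \<le> p" "p \<le> 1"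
  shows "distr (PiM UNIV (\<lambda>_::'i. measure_pmf (bernoulli_pmf p)))
      (PiM UNIV (\<lambda>_. measure_pmf (bernoulli_pmf (1 - p)))) (\<lambda>\<omega> i. \<not> \<omega> i)
    = PiM UNIV (\<lambda>_. measure_pmf (bernoulli_pmf (1 - p)))"
proof -
  let ?Bp = "measure_pmf (bernoulli_pmf p)"
  let ?Bq = "measure_pmf (bernoulli_pmf (1 - p))"
  let ?P = "PiM UNIV (\<lambda>_::'i. ?Bp)"
  interpret prob_space ?P by (rule prob_space_bernoulli_field)
  have coordinate: "(\<lambda>\<omega>. \<omega> i) \<in> ?P \<rightarrow>\<^sub>M ?Bp" for i
    by (rule measurable_component_singleton) simp
  then have Not_coordinate: "(\<lambda>\<omega>. \<not> \<omega> i) \<in> ?P \<rightarrow>\<^sub>M ?Bq" for i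
    by (rule measurable_compose) simp
  have "distr ?P ?Bq (\<lambda>\<omega>. \<not> \<omega> i) = ?Bq" for i
  proof -
    have "distr ?P ?Bq (\<lambda>\<omega>. \<not> \<omega> i) = distr (distr ?P ?Bp (\<lambda>\<omega>. \<omega> i)) ?Bq Not"
      by (simp add: distr_distr coordinate comp_def)
    also have "\<dots> = distr ?Bp ?Bq Not"
      by (subst distr_PiM_component) (simp_all add: prob_space_measure_pmf)
    also have "\<dots> = distr ?Bp (count_space UNIV) Not" by (rule distr_cong) simp_all
    also have "\<dots> = ?Bq" by (simp add: map_pmf_rep_eq[symmetric] map_pmf_Not_bernoulli assms)
    finally show ?thesis .
  qed
  moreover have "indep_vars (\<lambda>_. ?Bq) (\<lambda>i \<omega>. \<not> \<omega> i) UNIV"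
    using indep_vars_compose2
        [OF indep_vars_bernoulli_field_reindex[OF inj_on_id], where Y = "\<lambda>_. Not"]
    by simp
  ultimately show ?thesis
    by (subst (asm) indep_vars_iff_distr_eq_PiM) (simp_all add: Not_coordinate restrict_UNIV)
qed

lemma inj_crossed_face: "inj crossed_face"
proof (rule injI)
  fix a b :: "'n site \<times> 'n"
  assume "crossed_face a = crossed_face b"
  moreover obtain x i y j where "a = (x, i)" "b = (y, j)" by fastforce
  ultimately have "i = j" "x(i := x i + 1) = y(i := y i + 1)" unfolding crossed_face_def by auto
  then show "a = b"
    using \<open>a = (x, i)\<close> \<open>b = (y, j)\<close>
    by (metis fun_upd_idem_iff fun_upd_upd add_right_cancel fun_upd_same)
qed

lemma sets_face_perc[measurable_cong]: "sets (face_perc p) = sets (PiM UNIV (\<lambda>_. count_space UNIV))"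
  unfolding face_perc_def by (rule sets_bernoulli_field)

lemma space_bond_perc[simp]: "space (bond_perc p) = UNIV"
  unfolding bond_perc_def by simp

lemma sets_bond_perc[measurable_cong]: "sets (bond_perc p) = sets (PiM UNIV (\<lambda>_. count_space UNIV))"
  unfolding bond_perc_def by (rule sets_bernoulli_field)

lemma measurable_dual_config: "dual_config \<in> face_perc p \<rightarrow>\<^sub>M bond_perc q"
  unfolding dual_config_def[abs_def] measurable_cong_sets[OF sets_face_perc sets_bond_perc]
  by (rule measurable_bool_field_map)

lemma distr_dual_config:
  assumes "0 \<le> p" "p \<le> 1"
  shows "distr (face_perc p) (bond_perc (1 - p)) dual_config
    = (bond_perc (1 - p) :: ('n::finite site \<times> 'n \<Rightarrow> bool) measure)"
proof -
  let ?reindex = "\<lambda>(\<omega> :: 'n face \<Rightarrow> bool) b. \<omega> (crossed_face b)"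
  have reindex:
    "distr (face_perc p) (bond_perc p) ?reindex = (bond_perc p :: ('n site \<times> 'n \<Rightarrow> bool) measure)"
    unfolding face_perc_def bond_perc_def
    using distr_PiM_reindex[of UNIV "\<lambda>_. measure_pmf (bernoulli_pmf p)" crossed_face UNIV] inj_crossed_face
    by (simp add: prob_space_measure_pmf restrict_UNIV)
  have reindex_measurable: "?reindex \<in> face_perc p \<rightarrow>\<^sub>M bond_perc p"
    unfolding measurable_cong_sets[OF sets_face_perc sets_bond_perc]
    by (rule measurable_bool_field_map[of "\<lambda>x. x"])
  have Not_measurable:
    "(\<lambda>\<eta> b. \<not> \<eta> b) \<in> bond_perc p \<rightarrow>\<^sub>M (bond_perc (1 - p) :: ('n site \<times> 'n \<Rightarrow> bool) measure)"
    unfolding measurable_cong_sets[OF sets_bond_perc sets_bond_perc]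
    by (rule measurable_bool_field_map[of Not "\<lambda>b. b"])
  have "distr (face_perc p) (bond_perc (1 - p)) dual_config
      = distr (distr (face_perc p) (bond_perc p) ?reindex) (bond_perc (1 - p)) (\<lambda>\<eta> b. \<not> \<eta> b)"
    by (subst distr_distr[OF Not_measurable reindex_measurable])
      (simp add: comp_def dual_config_def[abs_def])
  also have "\<dots> = distr (bond_perc p) (bond_perc (1 - p)) (\<lambda>\<eta> b. \<not> \<eta> b)"
    unfolding reindex ..
  also have "\<dots> = bond_perc (1 - p)"
    unfolding bond_perc_def using distr_bernoulli_field_Not[OF assms] .
  finally show ?thesis .
qed

lemma sets_encloses_K:
  "{\<omega> \<in> space (face_perc p :: ('n::finite face \<Rightarrow> bool) measure). encloses (K \<omega>) V} \<in> sets (face_perc p)"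
proof -
  define enclosing where "enclosing = {F :: 'n face set. finite F \<and>
    (\<exists>x. x \<notin> \<Union>(face_set ` F) \<and> bounded (connected_component_set (- \<Union>(face_set ` F)) x) \<and>
         V \<subseteq> connected_component_set (- \<Union>(face_set ` F)) x)}"
  have "countable enclosing"
    unfolding enclosing_def by (rule countable_subset[OF _ countable_Collect_finite]) auto
  moreover have "{\<omega>. \<forall>f\<in>F. \<omega> f} \<in> sets (face_perc p)" if "F \<in> enclosing" for F
  proof -
    have "finite F" using that unfolding enclosing_def by simp
    then have "{\<omega> \<in> space (PiM UNIV (\<lambda>_. count_space UNIV)). \<forall>f\<in>F. \<omega> f}
        \<in> sets (PiM UNIV (\<lambda>_. count_space UNIV) :: ('n face \<Rightarrow> bool) measure)"
      by measurable
    then show ?thesis by (simp add: sets_face_perc space_PiM PiE_UNIV_domain)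
  qed
  ultimately have "(\<Union>F\<in>enclosing. {\<omega>. \<forall>f\<in>F. \<omega> f}) \<in> sets (face_perc p)"
    by (intro sets.countable_UN') auto
  moreover have "{\<omega> \<in> space (face_perc p). encloses (K \<omega>) V} = (\<Union>F\<in>enclosing. {\<omega>. \<forall>f\<in>F. \<omega> f})"
    unfolding encloses_def face_set_subset_K_iff enclosing_def face_perc_def by auto
  ultimately show ?thesis by simp
qed

lemma encloses_dual_box_imp_box_clusters_finite:
  assumes "encloses (K \<omega>) (dual_box n)"
  shows "dual_config \<omega> \<in> box_clusters_finite n"
proof -
  obtain F x where F: "\<forall>f\<in>F. face_set f \<subseteq> K \<omega>"
    and bdd: "bounded (connected_component_set (- \<Union>(face_set ` F)) x)"
    and box: "dual_box n \<subseteq> connected_component_set (- \<Union>(face_set ` F)) x"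
    using assms unfolding encloses_def by blast
  have "finite (cluster (dual_config \<omega>) y)" if "\<forall>i. \<bar>y i\<bar> < int n" for y
    using enclosed_cluster_finite[OF F bdd] box dual_site_in_dual_box[OF that] by blast
  then show ?thesis unfolding box_clusters_finite_def by simp
qed

lemma measure_encloses_dual_box_le:
  assumes "0 \<le> p" "p \<le> 1"
  shows "measure (face_perc p :: ('n::finite face \<Rightarrow> bool) measure)
      {\<omega> \<in> space (face_perc p). encloses (K \<omega>) (dual_box n)}
    \<le> measure (bond_perc (1 - p)) (box_clusters_finite n :: ('n site \<times> 'n \<Rightarrow> bool) set)"
proof -
  let ?F = "face_perc p :: ('n face \<Rightarrow> bool) measure"
  let ?G = "box_clusters_finite n :: ('n site \<times> 'n \<Rightarrow> bool) set"
  interpret prob_space ?F unfolding face_perc_def by (rule prob_space_bernoulli_field)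
  have G: "?G \<in> sets (bond_perc (1 - p))" using sets_box_clusters_finite by (simp add: sets_bond_perc)
  have "measure ?F {\<omega> \<in> space ?F. encloses (K \<omega>) (dual_box n)}
      \<le> measure ?F (dual_config -` ?G \<inter> space ?F)"
    using encloses_dual_box_imp_box_clusters_finite
    by (intro finite_measure_mono measurable_sets[OF measurable_dual_config G]) auto
  also have "\<dots> = measure (distr ?F (bond_perc (1 - p)) dual_config) ?G"
    by (rule measure_distr[symmetric, OF measurable_dual_config G])
  also have "\<dots> = measure (bond_perc (1 - p)) ?G" by (subst distr_dual_config[OF assms]) (rule refl)
  finally show ?thesis .
qed

section \<open>Percolation in the dual lattice\<close>

lemma bond_theta_zero: "bond_theta TYPE('n::finite) 0 = 0"
proof -
  let ?B = "bond_perc 0 :: ('n site \<times> 'n \<Rightarrow> bool) measure"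
  interpret prob_space ?B unfolding bond_perc_def by (rule prob_space_bernoulli_field)
  have "AE \<eta> in ?B. \<not> \<eta> b" for b
    unfolding bond_perc_def
    by (rule AE_PiM_component) (auto simp: prob_space_measure_pmf AE_measure_pmf_iff set_pmf_eq)
  then have "AE \<eta> in ?B. \<forall>b. \<not> \<eta> b" by (simp add: AE_all_countable)
  then have "AE \<eta> in ?B. \<not> infinite (cluster \<eta> (\<lambda>_. 0))"
  proof (rule eventually_mono)
    fix \<eta> :: "'n site \<times> 'n \<Rightarrow> bool"
    assume "\<forall>b. \<not> \<eta> b"
    then have "cluster \<eta> (\<lambda>_. 0) = {\<lambda>_. 0}"
      unfolding cluster_def bond_adj_def by (auto elim: converse_rtranclpE)
    then show "\<not> infinite (cluster \<eta> (\<lambda>_. 0))" by simp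
  qed
  from prob_eq_0_AE[OF this] show ?thesis unfolding bond_theta_def by simp
qed

lemma
  shows pc_bond_nonneg: "0 \<le> pc_bond TYPE('n::finite)"
    and bond_theta_pos: "pc_bond TYPE('n) < q \<Longrightarrow> q \<le> 1 \<Longrightarrow> 0 < bond_theta TYPE('n) q"
proof -
  define S where "S = {p. 0 \<le> p \<and> p \<le> 1 \<and> bond_theta TYPE('n) p = 0}"
  have "0 \<in> S" unfolding S_def using bond_theta_zero by simp
  moreover have bdd: "bdd_above S" unfolding S_def by (auto intro: bdd_aboveI[where M = 1])
  ultimately show "0 \<le> pc_bond TYPE('n)" unfolding pc_bond_def S_def[symmetric] by (rule cSup_upper)
  assume "pc_bond TYPE('n) < q" "q \<le> 1"
  then have "q \<notin> S" using cSup_upper[OF _ bdd] unfolding pc_bond_def S_def[symmetric] by force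
  with \<open>0 \<le> pc_bond TYPE('n)\<close> \<open>pc_bond TYPE('n) < q\<close> \<open>q \<le> 1\<close> have "bond_theta TYPE('n) q \<noteq> 0"
    unfolding S_def by simp
  moreover have "0 \<le> bond_theta TYPE('n) q" unfolding bond_theta_def by simp
  ultimately show "0 < bond_theta TYPE('n) q" by simp
qed

lemma infinite_UNIV_bond: "infinite (UNIV :: ('n::finite site \<times> 'n) set)"
proof
  assume "finite (UNIV :: ('n site \<times> 'n) set)"
  then have "finite (range (\<lambda>k::int. ((\<lambda>_::'n. k), undefined :: 'n)))"
    by (rule finite_subset[rotated]) simp
  moreover have "inj (\<lambda>k::int. ((\<lambda>_::'n. k), undefined :: 'n))" by (auto simp: inj_on_def fun_eq_iff)
  ultimately show False by (simp add: finite_image_iff)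
qed

lemma measure_all_clusters_finite_eq_0:
  assumes "pc_bond TYPE('n::finite) < q" "q \<le> 1"
  shows "measure (bond_perc q) (all_clusters_finite :: ('n site \<times> 'n \<Rightarrow> bool) set) = 0"
proof -
  let ?B = "bond_perc q :: ('n site \<times> 'n \<Rightarrow> bool) measure"
  let ?infinite = "{\<eta> :: 'n site \<times> 'n \<Rightarrow> bool. infinite (cluster \<eta> (\<lambda>_. 0))}"
  interpret prob_space ?B unfolding bond_perc_def by (rule prob_space_bernoulli_field)
  have "{\<eta> \<in> space bond_events. \<not> finite (cluster \<eta> (\<lambda>_. 0))}
      \<in> sets (bond_events :: ('n site \<times> 'n \<Rightarrow> bool) measure)"
    by measurable
  then have infinite: "?infinite \<in> events" by (simp add: sets_bond_perc space_PiM PiE_UNIV_domain)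
  have "all_clusters_finite \<subseteq> space ?B - ?infinite" by (auto simp: all_clusters_finite_def)
  then have "prob all_clusters_finite \<le> 1 - prob ?infinite"
    using finite_measure_mono[OF _ sets.compl_sets[OF infinite]] prob_compl[OF infinite] by simp
  also have "\<dots> < 1"
    using bond_theta_pos[OF assms] unfolding bond_theta_def by simp
  moreover have "prob all_clusters_finite \<in> {0, 1}"
    unfolding bond_perc_def
    by (rule bernoulli_field_zero_one_law[OF countableI_type infinite_UNIV_bond sets_all_clusters_finite])
      (rule open_finitely_many_in_all_clusters_finite_iff)
  ultimately show ?thesis by auto
qed

lemma measure_box_clusters_finite_tendsto:
  "(\<lambda>n. measure (bond_perc q) (box_clusters_finite n :: ('n::finite site \<times> 'n \<Rightarrow> bool) set))
    \<longlonglongrightarrow> measure (bond_perc q) (all_clusters_finite :: ('n site \<times> 'n \<Rightarrow> bool) set)"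
proof -
  interpret prob_space "bond_perc q :: ('n site \<times> 'n \<Rightarrow> bool) measure"
    unfolding bond_perc_def by (rule prob_space_bernoulli_field)
  have "range box_clusters_finite \<subseteq> events" using sets_box_clusters_finite sets_bond_perc by blast
  from finite_Lim_measure_decseq[OF this decseq_box_clusters_finite]
  show ?thesis by (simp add: INT_box_clusters_finite)
qed

theorem lemma3p4:
  fixes p :: real
  assumes "CARD('n::finite) \<ge> 2"
    and "0 \<le> p"
    and "p < 1 - pc_bond TYPE('n)"
  shows "(\<forall>n. {\<omega> \<in> space (face_perc p :: ('n face \<Rightarrow> bool) measure).
                 encloses (K \<omega>) (dual_box n)} \<in> sets (face_perc p))
       \<and> (\<lambda>n. measure (face_perc p :: ('n face \<Rightarrow> bool) measure)
               {\<omega> \<in> space (face_perc p). encloses (K \<omega>) (dual_box n)}) \<longlonglongrightarrow> 0"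
proof -
  have "p \<le> 1" "pc_bond TYPE('n) < 1 - p" "1 - p \<le> 1"
    using pc_bond_nonneg[where 'n = 'n] assms(2,3) by linarith+
  then have "measure (bond_perc (1 - p)) (all_clusters_finite :: ('n site \<times> 'n \<Rightarrow> bool) set) = 0"
    by (intro measure_all_clusters_finite_eq_0)
  then have lim:
      "(\<lambda>n. measure (bond_perc (1 - p)) (box_clusters_finite n :: ('n site \<times> 'n \<Rightarrow> bool) set))
        \<longlonglongrightarrow> 0" (is "?bound \<longlonglongrightarrow> 0")
    using measure_box_clusters_finite_tendsto[where 'n = 'n and q = "1 - p"] by simp
  have bound: "norm (measure (face_perc p :: ('n face \<Rightarrow> bool) measure)
      {\<omega> \<in> space (face_perc p). encloses (K \<omega>) (dual_box n)}) \<le> ?bound n" for n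
    unfolding real_norm_def abs_of_nonneg[OF measure_nonneg]
    by (rule measure_encloses_dual_box_le[OF assms(2) \<open>p \<le> 1\<close>])
  have "(\<lambda>n. measure (face_perc p :: ('n face \<Rightarrow> bool) measure)
      {\<omega> \<in> space (face_perc p). encloses (K \<omega>) (dual_box n)}) \<longlonglongrightarrow> 0"
    by (rule Lim_null_comparison[OF always_eventually lim]) (rule allI, rule bound)
  moreover have "{\<omega> \<in> space (face_perc p :: ('n face \<Rightarrow> bool) measure). encloses (K \<omega>) (dual_box n)}
      \<in> sets (face_perc p)" for n
    by (rule sets_encloses_K)
  ultimately show ?thesis by blast
qed

end
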